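(* Let $K$ be a finite field and $R_2=K[x_1,x_2,\ldots]/(x_1^2,x_2^2,\ x_i-x_{i+2}^2 \mid i\geqslant 1)$. Then $R_2$ has exactly one prime ideal $\mathfrak m$, this ideal satisfies $\mathfrak m^2=\mathfrak m\neq 0$ (so every prime ideal of $R_2$ has avoidance), but $R_2$ is not an avoidance ring.
   Context: All rings are commutative with $1\neq 0$. An ideal $I$ of a ring $R$ has avoidance if whenever $I_1,\ldots,I_n$ are finitely many ideals of $R$ with $I\subseteq\bigcup_{k=1}^n I_k$, then $I\subseteq I_k$ for some $k$. A ring is an avoidance ring if every ideal of it has avoidance. *)

theory Defs
  imports "HOL-Algebra.Algebra" "HOL-Library.Poly_Mapping"
begin

definition has_avoidance :: "('a, 'b) ring_scheme \<Rightarrow> 'a set \<Rightarrow> bool" where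
  "has_avoidance R I \<longleftrightarrow>
     (\<forall>(n::nat) (Is :: nat \<Rightarrow> 'a set).
        (\<forall>k<n. ideal (Is k) R) \<and> I \<subseteq> (\<Union>k<n. Is k) \<longrightarrow> (\<exists>k<n. I \<subseteq> Is k))"

definition avoidance_ring :: "('a, 'b) ring_scheme \<Rightarrow> bool" where
  "avoidance_ring R \<longleftrightarrow> (\<forall>I. ideal I R \<longrightarrow> has_avoidance R I)"

text \<open>Polynomial ring K[x_0, x_1, ...] in countably many variables
  (monomials are finitely supported exponent vectors).\<close>
type_synonym 'a mpoly_inf = "(nat \<Rightarrow>\<^sub>0 nat) \<Rightarrow>\<^sub>0 'a"

definition poly_ring_inf :: "('a::comm_ring_1) mpoly_inf ring" where
  "poly_ring_inf = \<lparr>partial_object.carrier = UNIV, monoid.mult = (*), monoid.one = 1, ring.zero = 0, ring.add = (+)\<rparr>"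

definition Xv :: "nat \<Rightarrow> ('a::comm_ring_1) mpoly_inf" where
  "Xv i = Poly_Mapping.single (Poly_Mapping.single i 1) 1"

text \<open>Paper's variable x_(i+1) is Xv i here. Relations:
  x_1^2, x_2^2, x_i - x_(i+2)^2 (i >= 1).\<close>
definition R2_rels :: "('a::comm_ring_1) mpoly_inf set" where
  "R2_rels = {Xv 0 ^ 2, Xv 1 ^ 2} \<union> range (\<lambda>i. Xv i - Xv (i + 2) ^ 2)"

definition R2 :: "('a::comm_ring_1) mpoly_inf set ring" where
  "R2 = poly_ring_inf Quot (genideal poly_ring_inf R2_rels)"

end

theory Submission
  imports Defs
begin

text \<open>
  The ideal \<open>m\<close> generated by the variables is the only prime of \<open>R\<^sub>2\<close>: a prime contains
  \<open>x\<^sub>1, x\<^sub>2\<close> since their squares vanish, hence every \<open>x\<^sub>i\<close> since \<open>x\<^sub>i = x\<^sub>i\<^sub>+\<^sub>2\<^sup>2\<close>, and \<open>m\<close>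
  is maximal. The same relation gives \<open>m = m\<^sup>2\<close>.

  If \<open>m\<close> is covered by finitely many ideals, then by B. H. Neumann's lemma one of them, \<open>I\<close>,
  has finite index \<open>N\<close> in \<open>(m, +)\<close>. Two of the powers \<open>z, \<dots>, z\<^sup>N\<^sup>+\<^sup>1\<close> of \<open>z = x\<^sub>i\<^sub>+\<^sub>2\<^sub>N\<close>
  agree modulo \<open>I\<close>, which for nilpotent \<open>z\<close> forces \<open>z\<^sup>s \<in> I\<close> for some \<open>s \<le> N\<close>; hence
  \<open>x\<^sub>i = z\<^sup>2\<^sup>^\<^sup>N \<in> I\<close>, and \<open>m \<subseteq> I\<close>.

  The relations are homogeneous for the \<open>\<rat>\<^sup>2\<close>-grading of \<open>K[x\<^sub>1, x\<^sub>2, \<dots>]\<close> giving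
  \<open>x\<^sub>2\<^sub>k\<^sub>+\<^sub>1\<close> degree \<open>(2\<^sup>-\<^sup>k, 0)\<close> and \<open>x\<^sub>2\<^sub>k\<^sub>+\<^sub>2\<close> degree \<open>(0, 2\<^sup>-\<^sup>k)\<close>. Let \<open>\<sigma>\<^sub>a\<^sub>b(p)\<close> be the
  coefficient sum of the component of \<open>p\<close> of degree \<open>(a, b)\<close> (this is \<open>hsum p a b\<close>). The
  polynomials with \<open>\<sigma>\<^sub>a\<^sub>b = 0\<close> for all \<open>a, b < 1\<close> form an ideal \<open>Q\<close>, on which
  \<open>p \<mapsto> (\<sigma>\<^sub>1\<^sub>0(p), \<sigma>\<^sub>0\<^sub>1(p))\<close> is linear over the constant terms. The preimages of the
  \<open>|K| + 1\<close> lines through the origin of \<open>K\<^sup>2\<close> are ideals containing the relations that cover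
  \<open>Q\<close>, and none of them contains both \<open>x\<^sub>1\<close> and \<open>x\<^sub>2\<close>.
\<close>

section \<open>Coset covers of abelian groups\<close>

definition add_subgroup :: "'a::ab_group_add set \<Rightarrow> bool" where
  "add_subgroup H \<longleftrightarrow> 0 \<in> H \<and> (\<forall>a\<in>H. \<forall>b\<in>H. a + b \<in> H) \<and> (\<forall>a\<in>H. - a \<in> H)"

lemma add_subgroup_zero: "add_subgroup H \<Longrightarrow> 0 \<in> H"
  and add_subgroup_add: "add_subgroup H \<Longrightarrow> a \<in> H \<Longrightarrow> b \<in> H \<Longrightarrow> a + b \<in> H"
  and add_subgroup_uminus: "add_subgroup H \<Longrightarrow> a \<in> H \<Longrightarrow> - a \<in> H"
  by (simp_all add: add_subgroup_def)

lemma add_subgroup_diff: "add_subgroup H \<Longrightarrow> a \<in> H \<Longrightarrow> b \<in> H \<Longrightarrow> a - b \<in> H"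
  using add_subgroup_add[of H a "- b"] add_subgroup_uminus[of H b] by simp

lemma add_subgroup_Int: "add_subgroup A \<Longrightarrow> add_subgroup B \<Longrightarrow> add_subgroup (A \<inter> B)"
  by (simp add: add_subgroup_def)

definition finite_index :: "'a::ab_group_add set \<Rightarrow> 'a set \<Rightarrow> bool" where
  "finite_index H G \<longleftrightarrow> (\<exists>T. finite T \<and> (\<forall>x\<in>G. \<exists>t\<in>T. x - t \<in> H))"

lemma finite_index_mono: "finite_index H G \<Longrightarrow> H \<subseteq> H' \<Longrightarrow> finite_index H' G"
  unfolding finite_index_def by (meson subsetD)

text \<open>A pair \<open>(a, H)\<close> stands for the coset \<open>a + H\<close>.\<close>

definition coset_cover :: "('a::ab_group_add \<times> 'a set) set \<Rightarrow> 'a set \<Rightarrow> bool" where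
  "coset_cover C G \<longleftrightarrow> finite C \<and> (\<forall>(a, H)\<in>C. add_subgroup H \<and> H \<subseteq> G)
     \<and> (\<forall>x\<in>G. \<exists>(a, H)\<in>C. x - a \<in> H)"

text \<open>If \<open>x\<close> lies in no coset of \<open>H\<^sub>1\<close> from the cover, then each coset \<open>x + b + H\<^sub>1\<close>
  is covered by cosets of the other subgroups, so every \<open>b + H\<^sub>1\<close> can be replaced by
  translates of those.\<close>

lemma coset_cover_eliminate:
  assumes G: "add_subgroup G" and C: "coset_cover C G"
    and x: "x \<in> G" "\<And>b. (b, H\<^sub>1) \<in> C \<Longrightarrow> x - b \<notin> H\<^sub>1"
  obtains C' where "coset_cover C' G" "snd ` C' \<subseteq> snd ` C - {H\<^sub>1}"
proof
  define C\<^sub>0 where "C\<^sub>0 = {c \<in> C. snd c \<noteq> H\<^sub>1}"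
  define C\<^sub>1 where "C\<^sub>1 = (\<lambda>(b, a, H). (b - x + a, H)) ` ({b. (b, H\<^sub>1) \<in> C} \<times> C\<^sub>0)"
  have fin: "finite C" and sub: "\<And>a H. (a, H) \<in> C \<Longrightarrow> add_subgroup H \<and> H \<subseteq> G"
    and cov: "\<And>z. z \<in> G \<Longrightarrow> \<exists>(a, H)\<in>C. z - a \<in> H"
    using C by (auto simp: coset_cover_def)
  show "snd ` (C\<^sub>0 \<union> C\<^sub>1) \<subseteq> snd ` C - {H\<^sub>1}"
    unfolding C\<^sub>0_def C\<^sub>1_def by (force simp: image_iff)
  have "{b. (b, H\<^sub>1) \<in> C} \<subseteq> fst ` C" by force
  then have "finite {b. (b, H\<^sub>1) \<in> C}" by (rule finite_surj[OF fin])
  then have "finite (C\<^sub>0 \<union> C\<^sub>1)" using fin by (simp add: C\<^sub>0_def C\<^sub>1_def)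
  moreover have "\<forall>(a, H)\<in>C\<^sub>0 \<union> C\<^sub>1. add_subgroup H \<and> H \<subseteq> G"
    using sub by (auto simp: C\<^sub>0_def C\<^sub>1_def)
  moreover have "\<exists>(a, H)\<in>C\<^sub>0 \<union> C\<^sub>1. z - a \<in> H" if z: "z \<in> G" for z
  proof -
    obtain b H where bH: "(b, H) \<in> C" "z - b \<in> H" using cov[OF z] by blast
    show ?thesis
    proof (cases "H = H\<^sub>1")
      case False
      then have "(b, H) \<in> C\<^sub>0" using bH(1) by (simp add: C\<^sub>0_def)
      then show ?thesis using bH(2) by blast
    next
      case True
      have "z - b \<in> G" using bH sub[OF bH(1)] by blast
      then have "x + (z - b) \<in> G" by (rule add_subgroup_add[OF G x(1)])
      then obtain a H' where aH': "(a, H') \<in> C" "x + (z - b) - a \<in> H'" using cov by blast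
      have "H' \<noteq> H\<^sub>1"
      proof
        assume H': "H' = H\<^sub>1"
        have "add_subgroup H\<^sub>1" using sub[OF bH(1)] True by simp
        then have "x - a \<in> H\<^sub>1"
          using add_subgroup_diff[of H\<^sub>1 "x + (z - b) - a" "z - b"] aH'(2) bH(2) H' True by simp
        then show False using x(2)[of a] aH'(1) H' by simp
      qed
      then have "(b - x + a, H') \<in> C\<^sub>1"
        using aH'(1) bH(1) True by (force simp: C\<^sub>0_def C\<^sub>1_def)
      moreover have "z - (b - x + a) \<in> H'" using aH'(2) by (simp add: algebra_simps)
      ultimately show ?thesis by blast
    qed
  qed
  ultimately show "coset_cover (C\<^sub>0 \<union> C\<^sub>1) G" by (simp add: coset_cover_def)
qed

lemma coset_cover_finite_index:
  assumes G: "add_subgroup G" and C: "coset_cover C G"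
  shows "\<exists>H\<in>snd ` C. finite_index H G"
proof -
  have fin: "finite (snd ` C)" using C by (simp add: coset_cover_def)
  have induct: "\<exists>H\<in>snd ` C. finite_index H G"
    if "finite Hs" "snd ` C \<subseteq> Hs" "coset_cover C G" for Hs and C :: "('a \<times> 'a set) set"
    using that
  proof (induction Hs arbitrary: C rule: finite_induct)
    case empty
    then have "C = {}" by simp
    then show ?case using empty.prems(2) add_subgroup_zero[OF G] by (auto simp: coset_cover_def)
  next
    case (insert H\<^sub>1 Hs)
    show ?case
    proof (cases "H\<^sub>1 \<in> snd ` C")
      case False
      then have "snd ` C \<subseteq> Hs" using insert.prems(1) by blast
      then show ?thesis by (rule insert.IH[OF _ insert.prems(2)])
    next
      case H\<^sub>1: True
      show ?thesis
      proof (cases "\<forall>x\<in>G. \<exists>b. (b, H\<^sub>1) \<in> C \<and> x - b \<in> H\<^sub>1")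
        case True
        have "finite (fst ` C)" using insert.prems(2) by (simp add: coset_cover_def)
        moreover have "\<exists>t\<in>fst ` C. x - t \<in> H\<^sub>1" if "x \<in> G" for x
          using True that by force
        ultimately have "finite_index H\<^sub>1 G" unfolding finite_index_def by blast
        then show ?thesis using H\<^sub>1 by blast
      next
        case False
        then obtain x where x: "x \<in> G" "\<And>b. (b, H\<^sub>1) \<in> C \<Longrightarrow> x - b \<notin> H\<^sub>1" by blast
        obtain C' where C': "coset_cover C' G" "snd ` C' \<subseteq> snd ` C - {H\<^sub>1}"
          by (rule coset_cover_eliminate[OF G insert.prems(2) x])
        then have "snd ` C' \<subseteq> Hs" using insert.prems(1) by blast
        then have "\<exists>H\<in>snd ` C'. finite_index H G" by (rule insert.IH[OF _ C'(1)])
        then show ?thesis using C'(2) by blast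
      qed
    qed
  qed
  show ?thesis by (rule induct[OF fin subset_refl C])
qed

lemma subgroup_cover_finite_index:
  assumes G: "add_subgroup G" and K: "finite K"
    and H: "\<And>k. k \<in> K \<Longrightarrow> add_subgroup (H k)" and cover: "G \<subseteq> (\<Union>k\<in>K. H k)"
  shows "\<exists>k\<in>K. finite_index (H k) G"
proof -
  have "coset_cover ((\<lambda>k. (0, H k \<inter> G)) ` K) G"
    using K H cover G by (fastforce simp: coset_cover_def intro: add_subgroup_Int)
  from coset_cover_finite_index[OF G this] show ?thesis
    by (auto intro: finite_index_mono)
qed

lemma pigeonhole_coset_reps:
  assumes T: "finite T" "\<forall>x\<in>G. \<exists>t\<in>T. x - t \<in> H" and H: "add_subgroup H"
    and f: "f ` {..card T} \<subseteq> G"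
  shows "\<exists>s t. s < t \<and> t \<le> card T \<and> f s - f t \<in> H"
proof -
  define g where "g k = (SOME t. t \<in> T \<and> f k - t \<in> H)" for k
  have g: "g k \<in> T \<and> f k - g k \<in> H" if "k \<le> card T" for k
  proof -
    have "f k \<in> G" using f that by auto
    then obtain t where "t \<in> T \<and> f k - t \<in> H" using T(2) by blast
    then show ?thesis unfolding g_def by (rule someI)
  qed
  have same: "f s - f t \<in> H" if "s \<le> card T" "t \<le> card T" "g s = g t" for s t
    using add_subgroup_diff[OF H, of "f s - g s" "f t - g t"] g[OF that(1)] g[OF that(2)] that(3)
    by simp
  have "g ` {..card T} \<subseteq> T" using g by auto
  then have "card (g ` {..card T}) \<le> card T" by (rule card_mono[OF T(1)])
  then have "card (g ` {..card T}) < card {..card T}" by simp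
  then obtain s t where st: "s \<le> card T" "t \<le> card T" "s \<noteq> t" "g s = g t"
    using pigeonhole[of g "{..card T}"] unfolding inj_on_def by auto
  show ?thesis
  proof (cases "s < t")
    case True
    then show ?thesis using same[OF st(1,2,4)] st(2) by blast
  next
    case False
    then have "t < s" using st(3) by simp
    then show ?thesis using same[OF st(2,1) st(4)[symmetric]] st(1) by blast
  qed
qed

section \<open>Ideals of commutative rings\<close>

definition ring_ideal :: "'a::comm_ring_1 set \<Rightarrow> bool" where
  "ring_ideal I \<longleftrightarrow> add_subgroup I \<and> (\<forall>a\<in>I. \<forall>r. r * a \<in> I)"

lemma ring_ideal_add_subgroup: "ring_ideal I \<Longrightarrow> add_subgroup I"
  and ring_ideal_mult_left: "ring_ideal I \<Longrightarrow> a \<in> I \<Longrightarrow> r * a \<in> I"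
  by (simp_all add: ring_ideal_def)

lemma ring_ideal_zero: "ring_ideal I \<Longrightarrow> 0 \<in> I"
  and ring_ideal_add: "ring_ideal I \<Longrightarrow> a \<in> I \<Longrightarrow> b \<in> I \<Longrightarrow> a + b \<in> I"
  and ring_ideal_diff: "ring_ideal I \<Longrightarrow> a \<in> I \<Longrightarrow> b \<in> I \<Longrightarrow> a - b \<in> I"
  by (simp_all add: ring_ideal_add_subgroup add_subgroup_zero add_subgroup_add add_subgroup_diff)

lemma ring_ideal_mult_right: "ring_ideal I \<Longrightarrow> a \<in> I \<Longrightarrow> a * r \<in> I"
  using ring_ideal_mult_left[of I a r] by (simp add: mult.commute)

lemma ring_ideal_diff_iff: "ring_ideal I \<Longrightarrow> a - b \<in> I \<Longrightarrow> a \<in> I \<longleftrightarrow> b \<in> I"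
  using ring_ideal_add[of I "a - b" b] ring_ideal_diff[of I a "a - b"] by auto

lemma ring_ideal_sum: "ring_ideal I \<Longrightarrow> (\<And>i. i \<in> A \<Longrightarrow> f i \<in> I) \<Longrightarrow> sum f A \<in> I"
  by (induction A rule: infinite_finite_induct) (auto intro: ring_ideal_zero ring_ideal_add)

lemma ring_ideal_power_diff: "ring_ideal I \<Longrightarrow> a - b \<in> I \<Longrightarrow> a ^ n - b ^ n \<in> I"
  using power_diff_sumr2[of a n b] by (auto intro: ring_ideal_mult_right)

text \<open>Modulo \<open>I\<close>, \<open>z\<^sup>s (1 - z\<^sup>d) \<equiv> 0\<close> and \<open>1 - z\<^sup>d\<close> is invertible since \<open>z\<close> is nilpotent.\<close>

lemma ring_ideal_power_mem_if_nilpotent: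
  assumes I: "ring_ideal I" and st: "z ^ s - z ^ t \<in> I" "s < t" and nil: "z ^ E \<in> I"
  shows "z ^ s \<in> I"
proof -
  define d where "d = t - s"
  have "z ^ s * (1 - z ^ d) = z ^ s - z ^ t" using st(2)
    by (simp add: d_def right_diff_distrib power_add[symmetric])
  then have "z ^ s * (1 - z ^ d) * (\<Sum>l<E. (z ^ d) ^ l) \<in> I"
    using st(1) by (simp add: ring_ideal_mult_right[OF I])
  moreover have "z ^ s * (1 - z ^ d) * (\<Sum>l<E. (z ^ d) ^ l) = z ^ s * (1 - (z ^ d) ^ E)"
    by (simp only: one_diff_power_eq mult.assoc)
  moreover have "z ^ s * (1 - (z ^ d) ^ E) = z ^ s - z ^ (s + d * E)"
    by (simp add: right_diff_distrib power_add power_mult)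
  moreover have "z ^ (s + d * E) \<in> I"
  proof -
    have "1 \<le> d" using st(2) by (simp add: d_def)
    then have "E \<le> d * E" by simp
    then have "E \<le> s + d * E" by linarith
    then have "z ^ (s + d * E) = z ^ E * z ^ (s + d * E - E)" by (simp add: power_add[symmetric])
    then show ?thesis using ring_ideal_mult_right[OF I nil] by simp
  qed
  ultimately show ?thesis using ring_ideal_diff_iff[OF I] by auto
qed

section \<open>A grading of the polynomial ring\<close>

lemma poly_ring_inf_simps [simp]:
  "carrier poly_ring_inf = UNIV" "monoid.mult poly_ring_inf = (*)" "monoid.one poly_ring_inf = 1"
  "ring.zero poly_ring_inf = 0" "ring.add poly_ring_inf = (+)"
  by (simp_all add: poly_ring_inf_def)

lemma cring_poly_ring_inf: "cring (poly_ring_inf :: ('a::comm_ring_1) mpoly_inf ring)"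
  by (intro cringI abelian_groupI comm_monoidI)
    (auto simp: algebra_simps, metis ab_left_minus add.commute)

lemma ideal_poly_ring_inf_iff:
  "ideal S (poly_ring_inf :: ('a::comm_ring_1) mpoly_inf ring) \<longleftrightarrow> ring_ideal S"
proof -
  interpret cring "poly_ring_inf :: 'a mpoly_inf ring" by (rule cring_poly_ring_inf)
  have a_inv: "a_inv poly_ring_inf x = - x" for x :: "'a mpoly_inf"
    by (rule minus_equality) auto
  show ?thesis
  proof
    assume "ideal S poly_ring_inf"
    then interpret ideal S "poly_ring_inf :: 'a mpoly_inf ring" .
    show "ring_ideal S"
      using a_closed a_inv_closed I_l_closed additive_subgroup.zero_closed[OF is_additive_subgroup]
      by (auto simp: ring_ideal_def add_subgroup_def a_inv)
  next
    assume "ring_ideal S"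
    then show "ideal S poly_ring_inf"
      by (intro idealI ring_axioms add.subgroupI)
        (auto simp: ring_ideal_def add_subgroup_def a_inv mult.commute)
  qed
qed

definition linear_form :: "('k \<Rightarrow> 'a) \<Rightarrow> ('k \<Rightarrow>\<^sub>0 'a::comm_ring_1) \<Rightarrow> 'a" where
  "linear_form F p = (\<Sum>m\<in>Poly_Mapping.keys p. Poly_Mapping.lookup p m * F m)"

lemma linear_form_add: "linear_form F (p + q) = linear_form F p + linear_form F q"
  unfolding linear_form_def
  by (rule setsum_keys_plus_distrib[where f = "\<lambda>k v. v * F k"]) (simp_all add: distrib_right)

lemma linear_form_uminus: "linear_form F (- p) = - linear_form F p"
proof -
  have "Poly_Mapping.keys (- p) = Poly_Mapping.keys p" by (auto simp: in_keys_iff)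
  then show ?thesis by (simp add: linear_form_def sum_negf)
qed

lemma linear_form_diff: "linear_form F (p - q) = linear_form F p - linear_form F q"
  using linear_form_add[of F p "- q"] linear_form_uminus[of F q] by simp

lemma linear_form_zero [simp]: "linear_form F 0 = 0"
  and linear_form_single [simp]: "linear_form F (Poly_Mapping.single m x) = x * F m"
  by (simp_all add: linear_form_def)

lemma linear_form_sum: "linear_form F (sum f A) = (\<Sum>i\<in>A. linear_form F (f i))"
  by (induction A rule: infinite_finite_induct) (simp_all add: linear_form_add)

lemma sum_single_lookup:
  "(\<Sum>m\<in>Poly_Mapping.keys p. Poly_Mapping.single m (Poly_Mapping.lookup p m)) = p"
  by (rule poly_mapping_eqI) (simp add: lookup_sum lookup_single when_def in_keys_iff)

lemma times_eq_sum_single: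
  fixes g p :: "'k::comm_monoid_add \<Rightarrow>\<^sub>0 'a::comm_ring_1"
  shows "g * p = (\<Sum>n\<in>Poly_Mapping.keys g. \<Sum>k\<in>Poly_Mapping.keys p.
    Poly_Mapping.single (n + k) (Poly_Mapping.lookup g n * Poly_Mapping.lookup p k))"
  by (subst (1 2) sum_single_lookup[symmetric]) (simp add: sum_product mult_single)

lemma Xv_power:
  "(Xv i :: ('a::comm_ring_1) mpoly_inf) ^ k = Poly_Mapping.single (Poly_Mapping.single i k) 1"
  by (induction k) (simp_all add: Xv_def mult_single single_add[symmetric] add.commute)

definition weight :: "(nat \<Rightarrow> rat) \<Rightarrow> (nat \<Rightarrow>\<^sub>0 nat) \<Rightarrow> rat" where
  "weight e m = (\<Sum>i\<in>Poly_Mapping.keys m. of_nat (Poly_Mapping.lookup m i) * e i)"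

lemma weight_add: "weight e (m + n) = weight e m + weight e n"
  unfolding weight_def
  by (rule setsum_keys_plus_distrib[where f = "\<lambda>k v. of_nat v * e k"]) (simp_all add: distrib_right)

lemma weight_zero [simp]: "weight e 0 = 0"
  and weight_single [simp]: "weight e (Poly_Mapping.single i k) = of_nat k * e i"
  by (simp_all add: weight_def)

lemma weight_nonneg: "(\<And>i. 0 \<le> e i) \<Longrightarrow> 0 \<le> weight e m"
  unfolding weight_def by (auto intro!: sum_nonneg)

definition wt1 :: "nat \<Rightarrow> rat" where "wt1 i = (if even i then 1 / 2 ^ (i div 2) else 0)"
definition wt2 :: "nat \<Rightarrow> rat" where "wt2 i = (if odd i then 1 / 2 ^ (i div 2) else 0)"

lemma wt_Suc_Suc: "wt1 (i + 2) * 2 = wt1 i" "wt2 (i + 2) * 2 = wt2 i"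
  by (auto simp: wt1_def wt2_def)

lemma weight_wt_nonneg: "0 \<le> weight wt1 m" "0 \<le> weight wt2 m"
  by (auto intro: weight_nonneg simp: wt1_def wt2_def)

lemma weight_wt_pos:
  assumes "m \<noteq> 0"
  shows "0 < weight wt1 m \<or> 0 < weight wt2 m"
proof -
  obtain i where i: "i \<in> Poly_Mapping.keys m" using assms by (metis all_not_in_conv keys_eq_empty)
  have "weight wt1 m + weight wt2 m
      = (\<Sum>j\<in>Poly_Mapping.keys m. of_nat (Poly_Mapping.lookup m j) * (wt1 j + wt2 j))"
    by (simp add: weight_def sum.distrib[symmetric] distrib_left)
  also have "\<dots> > 0"
  proof (rule sum_pos2[OF finite_keys i])
    show "0 < of_nat (Poly_Mapping.lookup m i) * (wt1 i + wt2 i)"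
      using i by (auto simp: in_keys_iff wt1_def wt2_def)
  qed (auto simp: wt1_def wt2_def)
  finally show ?thesis by (meson add_nonpos_nonpos not_le)
qed

definition hsum :: "('a::comm_ring_1) mpoly_inf \<Rightarrow> rat \<Rightarrow> rat \<Rightarrow> 'a" where
  "hsum p a b = linear_form (\<lambda>m. if weight wt1 m = a \<and> weight wt2 m = b then 1 else 0) p"

lemma hsum_add: "hsum (p + q) a b = hsum p a b + hsum q a b"
  and hsum_uminus: "hsum (- p) a b = - hsum p a b"
  and hsum_diff: "hsum (p - q) a b = hsum p a b - hsum q a b"
  and hsum_zero [simp]: "hsum 0 a b = 0"
  by (simp_all add: hsum_def linear_form_add linear_form_uminus linear_form_diff)

lemma hsum_single:
  "hsum (Poly_Mapping.single m x) a b = (if weight wt1 m = a \<and> weight wt2 m = b then x else 0)"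
  by (simp add: hsum_def)

lemma hsum_Xv_power:
  "hsum (Xv i ^ k :: ('a::comm_ring_1) mpoly_inf) a b
    = (if of_nat k * wt1 i = a \<and> of_nat k * wt2 i = b then 1 else 0)"
  by (simp add: Xv_power hsum_single)

lemma hsum_Xv:
  "hsum (Xv i :: ('a::comm_ring_1) mpoly_inf) a b = (if wt1 i = a \<and> wt2 i = b then 1 else 0)"
  by (simp add: Xv_def hsum_single)

lemma hsum_rel: "hsum (Xv i - Xv (i + 2) ^ 2 :: ('a::comm_ring_1) mpoly_inf) a b = 0"
  using wt_Suc_Suc[of i] by (simp add: hsum_diff hsum_Xv hsum_Xv_power mult.commute)

lemma hsum_eq_0_if_neg: "a < 0 \<or> b < 0 \<Longrightarrow> hsum p a b = 0"
  unfolding hsum_def linear_form_def using weight_wt_nonneg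
  by (intro sum.neutral) (auto, (metis not_le)+)

lemma hsum_0_0: "hsum p 0 0 = Poly_Mapping.lookup p 0"
proof -
  have "weight wt1 m = 0 \<and> weight wt2 m = 0 \<longleftrightarrow> m = 0" for m
    using weight_wt_pos[of m] by (cases "m = 0") auto
  then have "hsum p 0 0 = (\<Sum>m\<in>Poly_Mapping.keys p. if m = 0 then Poly_Mapping.lookup p m else 0)"
    unfolding hsum_def linear_form_def by (intro sum.cong) auto
  also have "\<dots> = Poly_Mapping.lookup p 0" by (simp add: in_keys_iff)
  finally show ?thesis .
qed

lemma hsum_times:
  "hsum (g * p) a b = (\<Sum>n\<in>Poly_Mapping.keys g.
     Poly_Mapping.lookup g n * hsum p (a - weight wt1 n) (b - weight wt2 n))"
proof -
  have "hsum (g * p) a b = (\<Sum>n\<in>Poly_Mapping.keys g. \<Sum>k\<in>Poly_Mapping.keys p.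
      hsum (Poly_Mapping.single (n + k) (Poly_Mapping.lookup g n * Poly_Mapping.lookup p k)) a b)"
    by (subst times_eq_sum_single) (simp add: hsum_def linear_form_sum)
  also have "\<dots> = (\<Sum>n\<in>Poly_Mapping.keys g.
      Poly_Mapping.lookup g n * hsum p (a - weight wt1 n) (b - weight wt2 n))"
    unfolding hsum_def linear_form_def sum_distrib_left
    by (intro sum.cong refl) (auto simp: hsum_single weight_add)
  finally show ?thesis .
qed

lemma hsum_times_eq_constant_term:
  assumes "\<And>n. n \<noteq> 0 \<Longrightarrow> hsum p (a - weight wt1 n) (b - weight wt2 n) = 0"
  shows "hsum (r * p) a b = Poly_Mapping.lookup r 0 * hsum p a b"
proof -
  have "hsum (r * p) a b
      = (\<Sum>n\<in>Poly_Mapping.keys r. if n = 0 then Poly_Mapping.lookup r n * hsum p a b else 0)"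
    unfolding hsum_times using assms by (intro sum.cong) auto
  also have "\<dots> = Poly_Mapping.lookup r 0 * hsum p a b" by (simp add: in_keys_iff)
  finally show ?thesis .
qed

lemma lookup_times_0:
  fixes r p :: "('a::comm_ring_1) mpoly_inf"
  shows "Poly_Mapping.lookup (r * p) 0 = Poly_Mapping.lookup r 0 * Poly_Mapping.lookup p 0"
proof -
  have "hsum (r * p) 0 0 = Poly_Mapping.lookup r 0 * hsum p 0 0"
    by (rule hsum_times_eq_constant_term) (auto intro!: hsum_eq_0_if_neg dest: weight_wt_pos)
  then show ?thesis by (simp add: hsum_0_0)
qed

definition Mset :: "('a::comm_ring_1) mpoly_inf set" where
  "Mset = {p. Poly_Mapping.lookup p 0 = 0}"

definition Qset :: "('a::comm_ring_1) mpoly_inf set" where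
  "Qset = {p. \<forall>a b. a < 1 \<and> b < 1 \<longrightarrow> hsum p a b = 0}"

text \<open>\<open>Jset c\<close> is the preimage of the line of slope \<open>c\<close> (\<open>None\<close>: the vertical line) under
  \<open>p \<mapsto> (hsum p 1 0, hsum p 0 1)\<close>.\<close>

definition Jset :: "('a::comm_ring_1) option \<Rightarrow> 'a mpoly_inf set" where
  "Jset c = {p \<in> Qset. case c of Some l \<Rightarrow> hsum p 0 1 = l * hsum p 1 0 | None \<Rightarrow> hsum p 1 0 = 0}"

lemma ring_ideal_Mset: "ring_ideal Mset"
  by (simp add: ring_ideal_def add_subgroup_def Mset_def lookup_add lookup_times_0)

lemma Qset_times:
  assumes "p \<in> Qset"
  shows "r * p \<in> Qset"
proof -
  have "hsum p (a - weight wt1 n) (b - weight wt2 n) = 0" if "a < 1" "b < 1" for a b n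
  proof -
    have "a - weight wt1 n < 1" "b - weight wt2 n < 1" using that weight_wt_nonneg[of n]
      by linarith+
    then show ?thesis using assms by (simp add: Qset_def)
  qed
  then have "hsum (r * p) a b = 0" if "a < 1" "b < 1" for a b
    unfolding hsum_times using that by simp
  then show ?thesis by (simp add: Qset_def)
qed

lemma hsum_times_Qset:
  assumes "p \<in> Qset"
  shows "hsum (r * p) 1 0 = Poly_Mapping.lookup r 0 * hsum p 1 0"
    and "hsum (r * p) 0 1 = Poly_Mapping.lookup r 0 * hsum p 0 1"
proof -
  have Q: "hsum p a b = 0" if "a < 1" "b < 1" for a b using assms that by (simp add: Qset_def)
  have vanish: "hsum p (1 - weight wt1 n) (0 - weight wt2 n) = 0
      \<and> hsum p (0 - weight wt1 n) (1 - weight wt2 n) = 0"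
    if "n \<noteq> 0" for n
    using weight_wt_pos[OF that]
  proof
    assume pos: "0 < weight wt1 n"
    have "hsum p (1 - weight wt1 n) (0 - weight wt2 n) = 0"
      using pos weight_wt_nonneg[of n] by (intro Q) simp_all
    moreover have "hsum p (0 - weight wt1 n) (1 - weight wt2 n) = 0"
      using pos by (intro hsum_eq_0_if_neg) simp
    ultimately show ?thesis ..
  next
    assume pos: "0 < weight wt2 n"
    have "hsum p (1 - weight wt1 n) (0 - weight wt2 n) = 0"
      using pos by (intro hsum_eq_0_if_neg) simp
    moreover have "hsum p (0 - weight wt1 n) (1 - weight wt2 n) = 0"
      using pos weight_wt_nonneg[of n] by (intro Q) simp_all
    ultimately show ?thesis ..
  qed
  show "hsum (r * p) 1 0 = Poly_Mapping.lookup r 0 * hsum p 1 0"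
    by (rule hsum_times_eq_constant_term) (use vanish in blast)
  show "hsum (r * p) 0 1 = Poly_Mapping.lookup r 0 * hsum p 0 1"
    by (rule hsum_times_eq_constant_term) (use vanish in blast)
qed

lemma ring_ideal_Qset: "ring_ideal Qset"
  by (auto simp: ring_ideal_def add_subgroup_def Qset_times)
    (auto simp: Qset_def hsum_add hsum_uminus)

lemma ring_ideal_Jset: "ring_ideal (Jset c)"
  using ring_ideal_Qset unfolding ring_ideal_def add_subgroup_def Jset_def
  by (cases c) (auto simp: hsum_add hsum_uminus hsum_times_Qset distrib_left mult.left_commute)

lemma Xv_Mset: "Xv i \<in> Mset"
proof -
  have "Poly_Mapping.single i (1::nat) \<noteq> 0" by (metis lookup_single_eq lookup_zero one_neq_zero)
  then show ?thesis by (simp add: Mset_def Xv_def lookup_single when_def)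
qed

lemma Xv_Qset: "i < 2 \<Longrightarrow> Xv i \<in> Qset"
  by (auto simp: Qset_def hsum_Xv wt1_def wt2_def)

lemma Xv_not_in_Jset: "Xv 0 \<notin> Jset None" "Xv 1 \<notin> Jset (Some l)"
  by (simp_all add: Jset_def hsum_Xv wt1_def wt2_def)

section \<open>The quotient ring \<open>R2\<close>\<close>

definition rels_ideal :: "('a::comm_ring_1) mpoly_inf set" where
  "rels_ideal = genideal poly_ring_inf R2_rels"

lemma ring_ideal_rels_ideal: "ring_ideal (rels_ideal :: ('a::comm_ring_1) mpoly_inf set)"
proof -
  interpret cring "poly_ring_inf :: 'a mpoly_inf ring" by (rule cring_poly_ring_inf)
  show ?thesis unfolding rels_ideal_def ideal_poly_ring_inf_iff[symmetric]
    by (rule genideal_ideal) simp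
qed

lemma R2_rels_subset_rels_ideal: "R2_rels \<subseteq> rels_ideal"
proof -
  interpret cring "poly_ring_inf :: 'a mpoly_inf ring" by (rule cring_poly_ring_inf)
  show ?thesis unfolding rels_ideal_def by (rule genideal_self) simp
qed

lemma rels_ideal_subset: "ring_ideal S \<Longrightarrow> R2_rels \<subseteq> S \<Longrightarrow> rels_ideal \<subseteq> S"
proof -
  interpret cring "poly_ring_inf :: 'a mpoly_inf ring" by (rule cring_poly_ring_inf)
  show "ring_ideal S \<Longrightarrow> R2_rels \<subseteq> S \<Longrightarrow> rels_ideal \<subseteq> S"
    unfolding rels_ideal_def by (rule genideal_minimal) (simp_all add: ideal_poly_ring_inf_iff)
qed

lemma Xv_minus_square_mem: "Xv i - Xv (i + 2) ^ 2 \<in> rels_ideal"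
  and Xv_square_mem: "i < 2 \<Longrightarrow> Xv i ^ 2 \<in> rels_ideal"
  using R2_rels_subset_rels_ideal by (auto simp: R2_rels_def less_2_cases_iff)

lemma hsum_R2_rels:
  assumes "p \<in> R2_rels" "a < 2" "b < 2"
  shows "hsum p a b = 0"
  using assms(1) unfolding R2_rels_def
proof (elim UnE insertE rangeE emptyE)
  fix i assume "p = Xv i - Xv (i + 2) ^ 2"
  then show ?thesis using hsum_rel[of i] by simp
qed (use assms(2,3) in \<open>auto simp: hsum_Xv_power wt1_def wt2_def\<close>)

lemma rels_ideal_subset_Mset: "rels_ideal \<subseteq> Mset"
  and rels_ideal_subset_Qset: "rels_ideal \<subseteq> Qset"
  and rels_ideal_subset_Jset: "rels_ideal \<subseteq> Jset c"
  using hsum_R2_rels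
  by (intro rels_ideal_subset ring_ideal_Mset ring_ideal_Qset ring_ideal_Jset subsetI;
      force simp: Mset_def Qset_def Jset_def hsum_0_0[symmetric] split: option.split)+

lemma Xv_minus_power_mem: "Xv i - Xv (i + 2 * t) ^ 2 ^ t \<in> rels_ideal"
proof (induction t)
  case 0
  then show ?case by (simp add: ring_ideal_zero[OF ring_ideal_rels_ideal])
next
  case (Suc t)
  have "Xv (i + 2 * t) ^ 2 ^ t - (Xv (i + 2 * t + 2) ^ 2) ^ 2 ^ t \<in> rels_ideal"
    by (rule ring_ideal_power_diff[OF ring_ideal_rels_ideal Xv_minus_square_mem])
  then have "Xv (i + 2 * t) ^ 2 ^ t - Xv (i + 2 * Suc t) ^ 2 ^ Suc t \<in> rels_ideal"
    by (simp add: power_mult[symmetric] mult.commute)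
  from ring_ideal_add[OF ring_ideal_rels_ideal Suc.IH this] show ?case by simp
qed

lemma Xv_nilpotent: "Xv j ^ 2 ^ (j div 2 + 1) \<in> rels_ideal"
proof -
  have "Xv (j mod 2) ^ 2 - (Xv j ^ 2 ^ (j div 2)) ^ 2 \<in> rels_ideal"
    using ring_ideal_power_diff[OF ring_ideal_rels_ideal Xv_minus_power_mem[of "j mod 2" "j div 2"]]
    by simp
  moreover have "Xv (j mod 2) ^ 2 \<in> rels_ideal" by (simp add: Xv_square_mem)
  ultimately have "(Xv j ^ 2 ^ (j div 2)) ^ 2 \<in> rels_ideal"
    using ring_ideal_diff_iff[OF ring_ideal_rels_ideal] by blast
  then show ?thesis by (simp add: power_mult[symmetric] mult.commute)
qed

lemma Mset_subset_ideal:
  assumes S: "ring_ideal S" and X: "\<And>i. Xv i \<in> S"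
  shows "Mset \<subseteq> S"
proof
  fix p :: "'a mpoly_inf" assume "p \<in> Mset"
  then have p0: "Poly_Mapping.lookup p 0 = 0" by (simp add: Mset_def)
  have "Poly_Mapping.single m (Poly_Mapping.lookup p m) \<in> S" if m: "m \<in> Poly_Mapping.keys p" for m
  proof -
    have "m \<noteq> 0" using m p0 by (auto simp: in_keys_iff)
    then obtain i where i: "i \<in> Poly_Mapping.keys m" by (metis all_not_in_conv keys_eq_empty)
    then have "(m - Poly_Mapping.single i 1) + Poly_Mapping.single i 1 = m"
      by (intro poly_mapping_eqI)
        (auto simp: lookup_add lookup_minus lookup_single when_def in_keys_iff)
    then have "Poly_Mapping.single m (Poly_Mapping.lookup p m)
        = Poly_Mapping.single (m - Poly_Mapping.single i 1) (Poly_Mapping.lookup p m) * Xv i"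
      by (simp add: Xv_def mult_single)
    then show ?thesis using ring_ideal_mult_left[OF S X] by simp
  qed
  then have "(\<Sum>m\<in>Poly_Mapping.keys p. Poly_Mapping.single m (Poly_Mapping.lookup p m)) \<in> S"
    by (rule ring_ideal_sum[OF S])
  then show "p \<in> S" by (simp add: sum_single_lookup)
qed

lemma Xv_mem_if_radical:
  assumes S: "ring_ideal S" "rels_ideal \<subseteq> S" and rad: "\<And>x. x * x \<in> S \<Longrightarrow> x \<in> S"
  shows "Xv i \<in> S"
proof (induction i rule: less_induct)
  case (less i)
  have "Xv i ^ 2 \<in> S"
  proof (cases "i < 2")
    case True
    then have "Xv i ^ 2 \<in> rels_ideal" by (rule Xv_square_mem)
    then show ?thesis using S(2) by (rule subsetD[rotated])
  next
    case False
    define k where "k = i - 2"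
    have i: "i = k + 2" using False by (simp add: k_def)
    have "Xv k - Xv (k + 2) ^ 2 \<in> S" using Xv_minus_square_mem S(2) by (rule subsetD[rotated])
    moreover have "Xv k \<in> S" using less i by simp
    ultimately show ?thesis using ring_ideal_diff_iff[OF S(1)] i by blast
  qed
  then have "Xv i * Xv i \<in> S" by (simp add: power2_eq_square)
  then show ?case by (rule rad)
qed

lemma Mset_maximal:
  assumes S: "ring_ideal S" "Mset \<subseteq> S" and proper: "(1 :: ('a::field) mpoly_inf) \<notin> S"
  shows "S = Mset"
proof (rule ccontr)
  assume "S \<noteq> Mset"
  then obtain p where p: "p \<in> S" "p \<notin> Mset" using S(2) by blast
  define c where "c = Poly_Mapping.lookup p 0"
  have "c \<noteq> 0" using p(2) by (simp add: Mset_def c_def)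
  have "p - Poly_Mapping.single 0 c \<in> S"
    using S(2) by (auto simp: Mset_def c_def lookup_minus)
  then have "Poly_Mapping.single 0 c \<in> S" using ring_ideal_diff_iff[OF S(1)] p(1) by blast
  then have "Poly_Mapping.single 0 (1 / c) * Poly_Mapping.single 0 c \<in> S"
    by (rule ring_ideal_mult_left[OF S(1)])
  then show False using proper \<open>c \<noteq> 0\<close> by (simp add: mult_single)
qed

lemma Xv_mem_if_finite_index:
  fixes S :: "('a::comm_ring_1) mpoly_inf set"
  assumes S: "ring_ideal S" "rels_ideal \<subseteq> S" and fi: "finite_index S Mset"
  shows "Xv i \<in> S"
proof -
  obtain T where T: "finite T" "\<forall>x\<in>Mset. \<exists>t\<in>T. x - t \<in> S"
    using fi unfolding finite_index_def by blast
  define N where "N = card T"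
  define z :: "'a mpoly_inf" where "z = Xv (i + 2 * N)"
  have "(\<lambda>k. z ^ Suc k) ` {..N} \<subseteq> Mset"
    using ring_ideal_mult_right[OF ring_ideal_Mset Xv_Mset] by (auto simp: z_def)
  from pigeonhole_coset_reps[OF T ring_ideal_add_subgroup[OF S(1)] this[unfolded N_def]]
  obtain s t where st: "s < t" "t \<le> card T" "z ^ Suc s - z ^ Suc t \<in> S" by blast
  have nil: "z ^ 2 ^ ((i + 2 * N) div 2 + 1) \<in> S" using Xv_nilpotent[of "i + 2 * N"] S(2)
    unfolding z_def by blast
  have "Suc s < Suc t" using st(1) by simp
  then have zs: "z ^ Suc s \<in> S" by (rule ring_ideal_power_mem_if_nilpotent[OF S(1) st(3) _ nil])
  have "Suc s \<le> 2 ^ N" using st less_exp[of N] unfolding N_def by linarith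
  then have "z ^ 2 ^ N = z ^ Suc s * z ^ (2 ^ N - Suc s)" unfolding power_add[symmetric] by simp
  then have "z ^ 2 ^ N \<in> S" using ring_ideal_mult_right[OF S(1) zs] by simp
  moreover have "Xv i - z ^ 2 ^ N \<in> S" using Xv_minus_power_mem[of i N] S(2) unfolding z_def
    by blast
  ultimately show ?thesis using ring_ideal_diff_iff[OF S(1)] by blast
qed

definition cls :: "('a::comm_ring_1) mpoly_inf \<Rightarrow> 'a mpoly_inf set" where
  "cls p = rels_ideal +>\<^bsub>poly_ring_inf\<^esub> p"

lemma R2_eq: "R2 = poly_ring_inf Quot rels_ideal"
  by (simp add: R2_def rels_ideal_def)

lemma ideal_rels_ideal: "ideal rels_ideal (poly_ring_inf :: ('a::comm_ring_1) mpoly_inf ring)"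
  by (simp add: ideal_poly_ring_inf_iff ring_ideal_rels_ideal)

lemma cring_R2: "cring (R2 :: ('a::comm_ring_1) mpoly_inf set ring)"
  unfolding R2_eq by (rule ideal.quotient_is_cring[OF ideal_rels_ideal cring_poly_ring_inf])

lemma ring_hom_cls: "cls \<in> ring_hom poly_ring_inf (R2 :: ('a::comm_ring_1) mpoly_inf set ring)"
  unfolding R2_eq cls_def[abs_def] by (rule ideal.rcos_ring_hom[OF ideal_rels_ideal])

lemma cls_mult: "cls (a * b) = cls a \<otimes>\<^bsub>(R2 :: ('a::comm_ring_1) mpoly_inf set ring)\<^esub> cls b"
  and cls_one: "cls 1 = \<one>\<^bsub>(R2 :: ('a::comm_ring_1) mpoly_inf set ring)\<^esub>"
  using ring_hom_mult[OF ring_hom_cls, of a b] ring_hom_one[OF ring_hom_cls] by simp_all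

lemma carrier_R2: "carrier (R2 :: ('a::comm_ring_1) mpoly_inf set ring) = range cls"
  unfolding R2_eq FactRing_def A_RCOSETS_def' cls_def by auto

lemma zero_R2: "\<zero>\<^bsub>(R2 :: ('a::comm_ring_1) mpoly_inf set ring)\<^esub> = rels_ideal"
  unfolding R2_eq FactRing_def by simp

lemma cls_eq_iff: "cls a = cls b \<longleftrightarrow> a - b \<in> (rels_ideal :: ('a::comm_ring_1) mpoly_inf set)"
proof -
  have cls: "cls p = {h + p |h. h \<in> rels_ideal}" for p :: "'a mpoly_inf"
    unfolding cls_def a_r_coset_def' by auto
  note I = ring_ideal_rels_ideal[where 'a = 'a]
  show ?thesis
  proof
    assume "cls a = cls b"
    moreover have "a \<in> cls a" unfolding cls using ring_ideal_zero[OF I] by force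
    ultimately obtain h where "h \<in> rels_ideal" "a = h + b" unfolding cls by auto
    then show "a - b \<in> rels_ideal" by simp
  next
    assume ab: "a - b \<in> rels_ideal"
    show "cls a = cls b"
    proof (unfold cls, safe)
      fix h :: "'a mpoly_inf" assume "h \<in> rels_ideal"
      then show "\<exists>h'. h + a = h' + b \<and> h' \<in> rels_ideal"
        using ab by (intro exI[of _ "h + (a - b)"]) (auto intro: ring_ideal_add[OF I])
    next
      fix h :: "'a mpoly_inf" assume "h \<in> rels_ideal"
      then show "\<exists>h'. h + b = h' + a \<and> h' \<in> rels_ideal"
        using ab by (intro exI[of _ "h - (a - b)"]) (auto intro: ring_ideal_diff[OF I])
    qed
  qed
qed

lemma cls_eq_zero_iff: "cls a = \<zero>\<^bsub>(R2 :: ('a::comm_ring_1) mpoly_inf set ring)\<^esub> \<longleftrightarrow> a \<in> rels_ideal"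
proof -
  have "cls (0 :: 'a mpoly_inf) = rels_ideal"
    unfolding cls_def a_r_coset_def' by auto
  then show ?thesis using cls_eq_iff[of a 0] by (simp add: zero_R2)
qed

lemma ideal_R2_vimage:
  assumes J: "ideal J (R2 :: ('a::comm_ring_1) mpoly_inf set ring)"
  shows "ring_ideal (cls -` J)" "rels_ideal \<subseteq> cls -` J" "cls ` (cls -` J) = J"
proof -
  interpret cring "poly_ring_inf :: 'a mpoly_inf ring" by (rule cring_poly_ring_inf)
  interpret R2: ring "R2 :: 'a mpoly_inf set ring" using cring_R2 by (rule cring.axioms(1))
  interpret ring_hom_ring poly_ring_inf "R2 :: 'a mpoly_inf set ring" cls
    by (intro ring_hom_ringI2 ring_axioms R2.ring_axioms ring_hom_cls)
  show "ring_ideal (cls -` J)"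
    using ideal_vimage[OF J] by (simp add: ideal_poly_ring_inf_iff vimage_def)
  show "rels_ideal \<subseteq> cls -` J"
    using ideal.Icarr[OF J] additive_subgroup.zero_closed[OF ideal.axioms(1)[OF J]]
    by (auto simp: cls_eq_zero_iff[symmetric])
  have "J \<subseteq> range cls"
    using additive_subgroup.a_subset[OF ideal.axioms(1)[OF J]] by (simp add: carrier_R2)
  then show "cls ` (cls -` J) = J" by blast
qed

lemma ideal_R2_image:
  assumes S: "ring_ideal S" "rels_ideal \<subseteq> S"
  shows "ideal (cls ` S) (R2 :: ('a::comm_ring_1) mpoly_inf set ring)"
    and "cls p \<in> cls ` S \<longleftrightarrow> p \<in> S"
proof -
  interpret cring "poly_ring_inf :: 'a mpoly_inf ring" by (rule cring_poly_ring_inf)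
  show "ideal (cls ` S) (R2 :: 'a mpoly_inf set ring)"
    unfolding R2_eq cls_def[abs_def]
    by (rule ring_ideal_imp_quot_ideal[OF ideal_rels_ideal])
      (simp add: ideal_poly_ring_inf_iff S(1))
  show "cls p \<in> cls ` S \<longleftrightarrow> p \<in> S"
  proof
    assume "cls p \<in> cls ` S"
    then obtain s where "s \<in> S" "cls p = cls s" by auto
    then show "p \<in> S" using cls_eq_iff[of p s] S ring_ideal_diff_iff[OF S(1)] by blast
  qed auto
qed

section \<open>Prime ideals and avoidance in \<open>R2\<close>\<close>

definition mR2 :: "('a::comm_ring_1) mpoly_inf set set" where
  "mR2 = cls ` Mset"

lemma ideal_mR2: "ideal mR2 (R2 :: ('a::comm_ring_1) mpoly_inf set ring)"
  and cls_mem_mR2_iff: "cls p \<in> mR2 \<longleftrightarrow> p \<in> Mset"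
  unfolding mR2_def by (intro ideal_R2_image ring_ideal_Mset rels_ideal_subset_Mset)+

lemma primeideal_mR2: "primeideal mR2 (R2 :: ('a::field) mpoly_inf set ring)"
proof (rule primeidealI[OF ideal_mR2 cring_R2])
  have "cls 1 \<notin> (mR2 :: 'a mpoly_inf set set)" by (simp add: cls_mem_mR2_iff Mset_def)
  then show "carrier (R2 :: 'a mpoly_inf set ring) \<noteq> mR2" by (auto simp: carrier_R2)
next
  fix a b
  assume "a \<in> carrier (R2 :: 'a mpoly_inf set ring)" "b \<in> carrier (R2 :: 'a mpoly_inf set ring)"
    and ab: "a \<otimes>\<^bsub>R2\<^esub> b \<in> mR2"
  then obtain x y where xy: "a = cls x" "b = cls y" by (auto simp: carrier_R2)
  then have "Poly_Mapping.lookup x 0 * Poly_Mapping.lookup y 0 = 0"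
    using ab by (simp add: cls_mult[symmetric] cls_mem_mR2_iff Mset_def lookup_times_0)
  then show "a \<in> mR2 \<or> b \<in> mR2" using xy by (auto simp: cls_mem_mR2_iff Mset_def)
qed

lemma primeideal_R2_eq_mR2:
  assumes P: "primeideal P (R2 :: ('a::field) mpoly_inf set ring)"
  shows "P = mR2"
proof -
  have PI: "ideal P R2" using P by (rule primeideal.axioms(1))
  note S = ideal_R2_vimage[OF PI]
  have rad: "x \<in> cls -` P" if "x * x \<in> cls -` P" for x
    using primeideal.I_prime[OF P, of "cls x" "cls x"] that by (simp add: carrier_R2 cls_mult)
  have "1 \<notin> cls -` P"
  proof
    assume "1 \<in> cls -` P"
    then have "P = carrier R2" using ideal.one_imp_carrier[OF PI] by (simp add: cls_one)
    then show False using primeideal.I_notcarr[OF P] by simp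
  qed
  moreover have "Mset \<subseteq> cls -` P"
    using Mset_subset_ideal[OF S(1) Xv_mem_if_radical[OF S(1,2) rad]] .
  ultimately have "cls -` P = Mset" by (rule Mset_maximal[OF S(1), rotated])
  then show ?thesis using S(3) by (simp add: mR2_def)
qed

lemma primeideal_R2_iff: "primeideal P (R2 :: ('a::field) mpoly_inf set ring) \<longleftrightarrow> P = mR2"
  using primeideal_mR2 primeideal_R2_eq_mR2 by blast

lemma ideal_prod_mR2: "ideal_prod R2 mR2 mR2 = (mR2 :: ('a::comm_ring_1) mpoly_inf set set)"
proof
  interpret R: cring "R2 :: 'a mpoly_inf set ring" by (rule cring_R2)
  show "ideal_prod R2 mR2 mR2 \<subseteq> (mR2 :: 'a mpoly_inf set set)"
    using R.ideal_prod_inter[OF ideal_mR2 ideal_mR2] by blast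
  have PI: "ideal (ideal_prod R2 mR2 mR2) (R2 :: 'a mpoly_inf set ring)"
    by (rule R.ideal_prod_is_ideal[OF ideal_mR2 ideal_mR2])
  note S = ideal_R2_vimage[OF PI]
  have "Xv i \<in> cls -` ideal_prod R2 mR2 (mR2 :: 'a mpoly_inf set set)" for i
  proof -
    have "Xv i - Xv (i + 2) * Xv (i + 2) \<in> rels_ideal" using Xv_minus_square_mem[of i]
      by (simp add: power2_eq_square)
    then have "cls (Xv i) = cls (Xv (i + 2)) \<otimes>\<^bsub>R2\<^esub> cls (Xv (i + 2))"
      by (simp add: cls_eq_iff cls_mult[symmetric])
    also have "\<dots> \<in> ideal_prod R2 mR2 mR2"
      by (rule ideal_prod.prod) (simp_all add: cls_mem_mR2_iff Xv_Mset)
    finally show ?thesis by simp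
  qed
  then have "(Mset :: 'a mpoly_inf set) \<subseteq> cls -` ideal_prod R2 mR2 mR2"
    by (rule Mset_subset_ideal[OF S(1)])
  then show "(mR2 :: 'a mpoly_inf set set) \<subseteq> ideal_prod R2 mR2 mR2"
    unfolding mR2_def using S(3) by blast
qed

lemma mR2_ne_zero: "(mR2 :: ('a::comm_ring_1) mpoly_inf set set) \<noteq> {\<zero>\<^bsub>R2 :: 'a mpoly_inf set ring\<^esub>}"
proof
  assume zero: "(mR2 :: 'a mpoly_inf set set) = {\<zero>\<^bsub>R2 :: 'a mpoly_inf set ring\<^esub>}"
  have "cls (Xv 0 :: 'a mpoly_inf) \<in> mR2" by (simp add: cls_mem_mR2_iff Xv_Mset)
  then have "cls (Xv 0 :: 'a mpoly_inf) = \<zero>\<^bsub>R2 :: 'a mpoly_inf set ring\<^esub>" using zero by blast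
  then have "(Xv 0 :: 'a mpoly_inf) \<in> rels_ideal" by (rule cls_eq_zero_iff[THEN iffD1])
  then show False using rels_ideal_subset_Jset[of None] Xv_not_in_Jset(1) by blast
qed

lemma has_avoidance_mR2: "has_avoidance (R2 :: ('a::comm_ring_1) mpoly_inf set ring) mR2"
  unfolding has_avoidance_def
proof (intro allI impI)
  fix n :: nat and Is :: "nat \<Rightarrow> 'a mpoly_inf set set"
  assume "(\<forall>k<n. ideal (Is k) R2) \<and> mR2 \<subseteq> (\<Union>k<n. Is k)"
  then have ideals: "\<And>k. k < n \<Longrightarrow> ideal (Is k) R2" and cover: "mR2 \<subseteq> (\<Union>k<n. Is k)" by auto
  note S = ideal_R2_vimage[OF ideals]
  have "Mset \<subseteq> (\<Union>k\<in>{..<n}. cls -` Is k)"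
  proof
    fix x :: "'a mpoly_inf" assume "x \<in> Mset"
    then have "cls x \<in> (\<Union>k<n. Is k)" using cover cls_mem_mR2_iff by blast
    then show "x \<in> (\<Union>k\<in>{..<n}. cls -` Is k)" by blast
  qed
  then have "\<exists>k\<in>{..<n}. finite_index (cls -` Is k) Mset"
    using ring_ideal_add_subgroup[OF S(1)]
    by (intro subgroup_cover_finite_index[OF ring_ideal_add_subgroup[OF ring_ideal_Mset]]) auto
  then obtain k where k: "k < n" "finite_index (cls -` Is k) Mset" by blast
  have "Mset \<subseteq> cls -` Is k"
    using Mset_subset_ideal[OF S(1)[OF k(1)] Xv_mem_if_finite_index[OF S(1,2)[OF k(1)] k(2)]] .
  then have "mR2 \<subseteq> Is k" using S(3)[OF k(1)] by (auto simp: mR2_def)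
  with k(1) show "\<exists>k<n. mR2 \<subseteq> Is k" by blast
qed

lemma has_avoidance_finite_family:
  assumes I: "has_avoidance R I" and A: "finite A"
    and J: "\<And>a. a \<in> A \<Longrightarrow> ideal (J a) R" and cover: "I \<subseteq> (\<Union>a\<in>A. J a)"
  shows "\<exists>a\<in>A. I \<subseteq> J a"
proof -
  obtain n :: nat and h where A: "A = h ` {k. k < n}" using A unfolding finite_conv_nat_seg_image
    by blast
  have "(\<forall>k<n. ideal (J (h k)) R) \<and> I \<subseteq> (\<Union>k<n. J (h k))" using J cover A by auto
  then obtain k where "k < n" "I \<subseteq> J (h k)"
    using spec[OF spec[OF I[unfolded has_avoidance_def], of n], of "\<lambda>k. J (h k)"] by blast
  then show ?thesis using A by auto
qed

lemma Qset_subset_Union_Jset: "(Qset :: ('a::field) mpoly_inf set) \<subseteq> (\<Union>c. Jset c)"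
proof
  fix p :: "'a mpoly_inf" assume p: "p \<in> Qset"
  show "p \<in> (\<Union>c. Jset c)"
  proof (cases "hsum p 1 0 = 0")
    case True
    then have "p \<in> Jset None" using p by (simp add: Jset_def)
    then show ?thesis by blast
  next
    case False
    then have "p \<in> Jset (Some (hsum p 0 1 / hsum p 1 0))" using p by (simp add: Jset_def)
    then show ?thesis by blast
  qed
qed

lemma R2_not_avoidance_ring:
  assumes "finite (UNIV :: ('a::field) set)"
  shows "\<not> avoidance_ring (R2 :: 'a mpoly_inf set ring)"
proof
  assume "avoidance_ring (R2 :: 'a mpoly_inf set ring)"
  moreover have "ideal (cls ` Qset) (R2 :: 'a mpoly_inf set ring)"
    by (rule ideal_R2_image(1)[OF ring_ideal_Qset rels_ideal_subset_Qset])
  ultimately have avoid: "has_avoidance R2 (cls ` (Qset :: 'a mpoly_inf set))"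
    unfolding avoidance_ring_def by blast
  have fin: "finite (UNIV :: 'a option set)" using assms by simp
  have ideals: "ideal (cls ` Jset c) (R2 :: 'a mpoly_inf set ring)" for c
    by (rule ideal_R2_image(1)[OF ring_ideal_Jset rels_ideal_subset_Jset])
  have "cls ` (Qset :: 'a mpoly_inf set) \<subseteq> (\<Union>c\<in>UNIV. cls ` Jset c)"
    using Qset_subset_Union_Jset by blast
  from has_avoidance_finite_family[OF avoid fin ideals this]
  obtain c where c: "cls ` (Qset :: 'a mpoly_inf set) \<subseteq> cls ` Jset c" by blast
  have mem: "(Xv i :: 'a mpoly_inf) \<in> Jset c" if "i < 2" for i
  proof -
    have "cls (Xv i :: 'a mpoly_inf) \<in> cls ` Jset c" using c Xv_Qset[OF that] by blast
    then show ?thesis by (simp add: ideal_R2_image(2)[OF ring_ideal_Jset rels_ideal_subset_Jset])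
  qed
  show False using mem[of 0] mem[of 1] Xv_not_in_Jset by (cases c) auto
qed

theorem mainTheorem11:
  assumes "finite (UNIV :: ('a::field) set)"
  shows "\<exists>m. (\<forall>P. primeideal P (R2 :: 'a mpoly_inf set ring) \<longleftrightarrow> P = m)
            \<and> ideal_prod R2 m m = m \<and> m \<noteq> {\<zero>\<^bsub>R2 :: 'a mpoly_inf set ring\<^esub>}
            \<and> (\<forall>P. primeideal P (R2 :: 'a mpoly_inf set ring) \<longrightarrow> has_avoidance R2 P)
            \<and> \<not> avoidance_ring (R2 :: 'a mpoly_inf set ring)"
proof (intro exI[of _ mR2] conjI allI impI)
  fix P :: "'a mpoly_inf set set"
  show "primeideal P R2 \<longleftrightarrow> P = mR2" by (rule primeideal_R2_iff)
next
  fix P :: "'a mpoly_inf set set"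
  assume "primeideal P R2"
  then show "has_avoidance R2 P" by (simp add: primeideal_R2_iff has_avoidance_mR2)
qed (rule ideal_prod_mR2 mR2_ne_zero R2_not_avoidance_ring[OF assms])+

end
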